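(* Let $\mathbb{F}$ be a finite field and $X\subset\mathbb{F}$. Given a decision tree $T$ for $X$, there is a pruned polynomial decision tree $T'$ deciding the same membership with $|T'|\leq 4|T|$.
   Context: A computation tree over $\mathbb{F}$ is a rooted binary tree; the root takes the input $x\in\mathbb{F}$; each computation node $\nu$ computes a value $u_\nu$ by an arithmetic operation (a constant, multiplication by a constant, $+$, $-$, $\times$, or $/$) on values computed at earlier nodes; each decision node tests an equality $u_\mu=u_\lambda$ between previously computed values and has two outgoing edges labeled "$=$" and "$\neq$". A decision tree for $X$ is a computation tree with leaves labeled "$\in$"/"$\notin$" such that input $x$ reaches a leaf labeled "$\in$" iff $x\in X$. $|T|$ is the length of the longest path through $T$. For $x\in\mathbb{F}$, $\mathbf{p}_x$ is the path $T$ takes on input $x$. $T$ is pruned if (1) for every decision node $\nu$ there are inputs $x,y$ such that $\mathbf{p}_x,\mathbf{p}_y$ both pass through $\nu$ but take different forks there, and (2) every computation node has at least one decision node as a descendant. $T$ is polynomial if no computation node performs division. *)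

theory Defs
  imports Main
begin

text \<open>Along a path, the computed values are kept
in a list: index 0 is the input x, index k is the value computed at the k-th
computation node on the path.  Operands refer to these indices (earlier nodes).\<close>

datatype 'f cop =
    OConst 'f
  | OScale 'f nat
  | OAdd nat nat
  | OSub nat nat
  | OMul nat nat
  | ODiv nat nat

datatype 'f ctree =
    Leaf bool                              \<comment> \<open>True = "in", False = "not in"\<close>
  | Comp "'f cop" "'f ctree"
  | Dec nat nat "'f ctree" "'f ctree"     \<comment> \<open>test u_i = u_j; "=" child, "~=" child\<close>

definition getv :: "'f list \<Rightarrow> nat \<Rightarrow> 'f option" where
  "getv vs i = (if i < length vs then Some (vs ! i) else None)"

fun eval_op :: "'f::field cop \<Rightarrow> 'f list \<Rightarrow> 'f option" where
  "eval_op (OConst c) vs = Some c"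
| "eval_op (OScale c i) vs = map_option (\<lambda>a. c * a) (getv vs i)"
| "eval_op (OAdd i j) vs = (case (getv vs i, getv vs j) of (Some a, Some b) \<Rightarrow> Some (a + b) | _ \<Rightarrow> None)"
| "eval_op (OSub i j) vs = (case (getv vs i, getv vs j) of (Some a, Some b) \<Rightarrow> Some (a - b) | _ \<Rightarrow> None)"
| "eval_op (OMul i j) vs = (case (getv vs i, getv vs j) of (Some a, Some b) \<Rightarrow> Some (a * b) | _ \<Rightarrow> None)"
| "eval_op (ODiv i j) vs = (case (getv vs i, getv vs j) of
      (Some a, Some b) \<Rightarrow> (if b = 0 then None else Some (a / b)) | _ \<Rightarrow> None)"

definition test :: "'f list \<Rightarrow> nat \<Rightarrow> nat \<Rightarrow> bool option" where
  "test vs i j = (case (getv vs i, getv vs j) of (Some a, Some b) \<Rightarrow> Some (a = b) | _ \<Rightarrow> None)"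

fun run :: "'f::field ctree \<Rightarrow> 'f list \<Rightarrow> bool option" where
  "run (Leaf b) vs = Some b"
| "run (Comp op t) vs = (case eval_op op vs of None \<Rightarrow> None | Some u \<Rightarrow> run t (vs @ [u]))"
| "run (Dec i j t1 t2) vs = (case test vs i j of None \<Rightarrow> None
      | Some True \<Rightarrow> run t1 vs | Some False \<Rightarrow> run t2 vs)"

definition decides :: "'f::field ctree \<Rightarrow> 'f set \<Rightarrow> bool" where
  "decides T X \<longleftrightarrow> (\<forall>x. run T [x] = Some (x \<in> X))"

text \<open>|T|: length (number of edges = number of internal nodes) of the longest path.\<close>
fun height :: "'f ctree \<Rightarrow> nat" where
  "height (Leaf b) = 0"
| "height (Comp op t) = Suc (height t)"
| "height (Dec i j t1 t2) = Suc (max (height t1) (height t2))"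

fun is_div :: "'f cop \<Rightarrow> bool" where
  "is_div (ODiv i j) = True"
| "is_div _ = False"

fun polynomial :: "'f ctree \<Rightarrow> bool" where
  "polynomial (Leaf b) = True"
| "polynomial (Comp op t) = (\<not> is_div op \<and> polynomial t)"
| "polynomial (Dec i j t1 t2) = (polynomial t1 \<and> polynomial t2)"

text \<open>Does the tree contain a decision node (i.e. a decision node descendant of its parent)?\<close>
fun has_dec :: "'f ctree \<Rightarrow> bool" where
  "has_dec (Leaf b) = False"
| "has_dec (Comp op t) = has_dec t"
| "has_dec (Dec i j t1 t2) = True"

text \<open>pruned_at t S v: every node of the subtree t satisfies the pruning conditions,
where S is the set of inputs whose path reaches the root of t and v x the values
computed along that path so far.\<close>
fun pruned_at :: "'f::field ctree \<Rightarrow> 'f set \<Rightarrow> ('f \<Rightarrow> 'f list) \<Rightarrow> bool" where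
  "pruned_at (Leaf b) S v = True"
| "pruned_at (Comp op t) S v =
     (has_dec t \<and>
      pruned_at t {x \<in> S. eval_op op (v x) \<noteq> None} (\<lambda>x. v x @ [the (eval_op op (v x))]))"
| "pruned_at (Dec i j t1 t2) S v =
     ((\<exists>x\<in>S. \<exists>y\<in>S. test (v x) i j = Some True \<and> test (v y) i j = Some False) \<and>
      pruned_at t1 {x \<in> S. test (v x) i j = Some True} v \<and>
      pruned_at t2 {x \<in> S. test (v x) i j = Some False} v)"

definition pruned :: "'f::field ctree \<Rightarrow> bool" where
  "pruned T \<longleftrightarrow> pruned_at T UNIV (\<lambda>x. [x])"

end

theory Submission
  imports Defs
begin

text \<open>Simulate T by a division-free tree that keeps every value u computed by T as a
fraction N / D of two values it computes itself (D omitted when it is 1). One arithmetic step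
of T costs at most four ring operations on fractions (for a sum: N1 D2, N2 D1, their sum and
D1 D2), and a test N1 / D1 = N2 / D2 becomes N1 D2 = N2 D1 after two multiplications, so
heights grow by a factor of at most 4. Denominators stay nonzero because T only divides by
nonzero values. Pruning then deletes decision nodes with an unreachable branch and
computation nodes followed by no decision, which only shortens paths.\<close>

fun leftmost_label :: "'f ctree \<Rightarrow> bool" where
  "leftmost_label (Leaf b) = b"
| "leftmost_label (Comp op t) = leftmost_label t"
| "leftmost_label (Dec i j t1 t2) = leftmost_label t1"

lemma run_no_dec:
  "\<not> has_dec t \<Longrightarrow> run t ws = Some b \<Longrightarrow> b = leftmost_label t"
  by (induction t arbitrary: ws) (auto split: option.splits)

text \<open>A degenerate test is replaced by the branch taken, which is pruned relative to the whole
input set S: this keeps \<open>pruned_at_prune\<close> free of any hypothesis on S.\<close>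

fun prune :: "'f::field ctree \<Rightarrow> 'f set \<Rightarrow> ('f \<Rightarrow> 'f list) \<Rightarrow> 'f ctree" where
  "prune (Leaf b) S v = Leaf b"
| "prune (Comp op t) S v =
     (let t' = prune t {x \<in> S. eval_op op (v x) \<noteq> None} (\<lambda>x. v x @ [the (eval_op op (v x))])
      in if has_dec t' then Comp op t' else Leaf (leftmost_label t'))"
| "prune (Dec i j t1 t2) S v =
     (let S1 = {x \<in> S. test (v x) i j = Some True}; S2 = {x \<in> S. test (v x) i j = Some False}
      in if S1 = {} then prune t2 S v else if S2 = {} then prune t1 S v
         else Dec i j (prune t1 S1 v) (prune t2 S2 v))"

lemma height_prune: "height (prune t S v) \<le> height t"
proof (induction t arbitrary: S v)
  case (Dec i j t1 t2)
  have "height (prune t1 S' v) \<le> max (height t1) (height t2)"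
    and "height (prune t2 S' v) \<le> max (height t1) (height t2)" for S'
    using Dec.IH[of S' v] by linarith+
  then show ?case by (simp add: Let_def le_SucI)
qed (auto simp: Let_def)

lemma polynomial_prune: "polynomial t \<Longrightarrow> polynomial (prune t S v)"
  by (induction t arbitrary: S v) (auto simp: Let_def)

lemma pruned_at_prune: "pruned_at (prune t S v) S v"
  by (induction t arbitrary: S v) (auto simp: Let_def)

lemma run_prune: "x \<in> S \<Longrightarrow> run t (v x) = Some r \<Longrightarrow> run (prune t S v) (v x) = Some r"
proof (induction t arbitrary: S v)
  case (Leaf b)
  then show ?case by simp
next
  case (Comp op t)
  define S' where "S' = {x \<in> S. eval_op op (v x) \<noteq> None}"
  define v' where "v' = (\<lambda>x. v x @ [the (eval_op op (v x))])"
  obtain u where u: "eval_op op (v x) = Some u" and "run t (v x @ [u]) = Some r"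
    using Comp.prems by (auto split: option.splits)
  then have "run (prune t S' v') (v x @ [u]) = Some r"
    using Comp.IH[of S' v'] Comp.prems(1) by (simp add: S'_def v'_def)
  then show ?case
    using u run_no_dec[of "prune t S' v'"] by (auto simp: S'_def v'_def Let_def)
next
  case (Dec i j t1 t2)
  then show ?case
    by (auto simp: Let_def split: option.splits bool.splits)
qed

fun comps :: "'f cop list \<Rightarrow> 'f ctree \<Rightarrow> 'f ctree" where
  "comps [] t = t"
| "comps (op # ops) t = Comp op (comps ops t)"

fun exec :: "'f::field cop list \<Rightarrow> 'f list \<Rightarrow> 'f list option" where
  "exec [] ws = Some ws"
| "exec (op # ops) ws = (case eval_op op ws of None \<Rightarrow> None | Some u \<Rightarrow> exec ops (ws @ [u]))"

lemma run_comps: "exec ops ws = Some ws' \<Longrightarrow> run (comps ops t) ws = run t ws'"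
  by (induction ops arbitrary: ws) (auto split: option.splits)

lemma height_comps: "height (comps ops t) = length ops + height t"
  by (induction ops) auto

lemma polynomial_comps:
  "(\<And>op. op \<in> set ops \<Longrightarrow> \<not> is_div op) \<Longrightarrow> polynomial t \<Longrightarrow> polynomial (comps ops t)"
  by (induction ops) auto

lemma exec_append: "exec (ops @ ops') ws = Option.bind (exec ops ws) (exec ops')"
  by (induction ops arbitrary: ws) (auto split: option.splits)

lemma exec_SomeD: "exec ops ws = Some ws' \<Longrightarrow> \<exists>w. ws' = ws @ w \<and> length w = length ops"
proof (induction ops arbitrary: ws)
  case (Cons op ops)
  then show ?case by (fastforce split: option.splits)
qed simp

lemma eval_op_append: "eval_op op ws = Some u \<Longrightarrow> eval_op op (ws @ w) = Some u"
  by (cases op) (auto simp: getv_def nth_append split: if_splits)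

definition den_val :: "'f::one list \<Rightarrow> nat option \<Rightarrow> 'f" where
  "den_val ws d = (case d of None \<Rightarrow> 1 | Some k \<Rightarrow> ws ! k)"

lemma den_val_append:
  "pred_option (\<lambda>k. k < length ws) d \<Longrightarrow> den_val (ws @ w) d = den_val ws d"
  by (cases d) (auto simp: den_val_def nth_append)

definition represents :: "'f::field list \<Rightarrow> nat \<times> nat option \<Rightarrow> 'f \<Rightarrow> bool" where
  "represents ws e v \<longleftrightarrow> fst e < length ws \<and> pred_option (\<lambda>k. k < length ws) (snd e)
     \<and> den_val ws (snd e) \<noteq> 0 \<and> v = ws ! fst e / den_val ws (snd e)"

lemma represents_append: "represents ws e v \<Longrightarrow> represents (ws @ w) e v"
  by (auto simp: represents_def den_val_append nth_append elim: option.pred_mono_strong)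

lemma represents_eq_iff:
  "represents ws e v \<Longrightarrow> represents ws e' v' \<Longrightarrow>
     v = v' \<longleftrightarrow> ws ! fst e * den_val ws (snd e') = ws ! fst e' * den_val ws (snd e)"
  by (auto simp: represents_def field_simps)

fun mul_den_op :: "nat \<Rightarrow> nat option \<Rightarrow> 'f::one cop" where
  "mul_den_op a None = OScale 1 a"
| "mul_den_op a (Some d) = OMul a d"

fun den_prod_op :: "nat option \<Rightarrow> nat option \<Rightarrow> 'f::one cop" where
  "den_prod_op None None = OConst 1"
| "den_prod_op None (Some d) = OScale 1 d"
| "den_prod_op (Some b) d = mul_den_op b d"

lemma eval_mul_den_op:
  "a < length ws \<Longrightarrow> pred_option (\<lambda>k. k < length ws) d \<Longrightarrow>
     eval_op (mul_den_op a d) ws = Some (ws ! a * den_val ws d)"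
  by (cases d) (auto simp: getv_def den_val_def)

lemma eval_den_prod_op:
  "pred_option (\<lambda>k. k < length ws) b \<Longrightarrow> pred_option (\<lambda>k. k < length ws) d \<Longrightarrow>
     eval_op (den_prod_op b d) ws = Some (den_val ws b * den_val ws d)"
  by (cases b; cases d) (auto simp: getv_def den_val_def)

definition cross_code :: "nat \<times> nat option \<Rightarrow> nat \<times> nat option \<Rightarrow> 'f::one cop list" where
  "cross_code e e' = [mul_den_op (fst e) (snd e'), mul_den_op (fst e') (snd e)]"

lemma exec_cross_code:
  assumes "represents ws e v" and "represents ws e' v'"
  shows "exec (cross_code e e') ws =
    Some (ws @ [ws ! fst e * den_val ws (snd e'), ws ! fst e' * den_val ws (snd e)])"
proof -
  have "eval_op (mul_den_op (fst e) (snd e')) ws = Some (ws ! fst e * den_val ws (snd e'))"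
    and "eval_op (mul_den_op (fst e') (snd e)) ws = Some (ws ! fst e' * den_val ws (snd e))"
    using assms by (simp_all add: represents_def eval_mul_den_op)
  then show ?thesis
    by (simp add: cross_code_def eval_op_append)
qed

text \<open>\<open>frac_code E n op\<close> is the division-free code for \<open>op\<close> together with the fraction
entry of its result, where \<open>n\<close> values have been computed so far and \<open>E ! i\<close> is the entry of
the \<open>i\<close>-th value of T. Out-of-range operands yield junk entries, which is harmless because the
simulated node is then undefined.\<close>

fun frac_code :: "(nat \<times> nat option) list \<Rightarrow> nat \<Rightarrow> 'f::one cop \<Rightarrow> 'f cop list \<times> (nat \<times> nat option)"
  where
  "frac_code E n (OConst c) = ([OConst c], (n, None))"
| "frac_code E n (OScale c i) = ([OScale c (fst (E ! i))], (n, snd (E ! i)))"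
| "frac_code E n (OAdd i j) =
     (cross_code (E ! i) (E ! j) @ [OAdd n (Suc n), den_prod_op (snd (E ! i)) (snd (E ! j))],
      (n + 2, Some (n + 3)))"
| "frac_code E n (OSub i j) =
     (cross_code (E ! i) (E ! j) @ [OSub n (Suc n), den_prod_op (snd (E ! i)) (snd (E ! j))],
      (n + 2, Some (n + 3)))"
| "frac_code E n (OMul i j) =
     ([OMul (fst (E ! i)) (fst (E ! j)), den_prod_op (snd (E ! i)) (snd (E ! j))], (n, Some (Suc n)))"
| "frac_code E n (ODiv i j) = (cross_code (E ! i) (E ! j), (n, Some (Suc n)))"

fun computes :: "'f::field cop list \<times> (nat \<times> nat option) \<Rightarrow> 'f list \<Rightarrow> 'f \<Rightarrow> bool" where
  "computes (code, e) ws u \<longleftrightarrow> (\<exists>ws'. exec code ws = Some ws' \<and> represents ws' e u)"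

lemma computes_frac_code_scale:
  assumes v: "represents ws (E ! i) v"
  shows "computes (frac_code E (length ws) (OScale c i)) ws (c * v)"
proof -
  define x where "x = c * ws ! fst (E ! i)"
  have "exec (fst (frac_code E (length ws) (OScale c i))) ws = Some (ws @ [x])"
    using v by (simp add: represents_def getv_def x_def)
  moreover have "represents (ws @ [x]) (snd (frac_code E (length ws) (OScale c i))) (c * v)"
    using v represents_append[OF v, of "[x]"] by (simp add: represents_def nth_append x_def)
  ultimately show ?thesis
    by (metis computes.simps prod.collapse)
qed

lemma computes_frac_code_add:
  assumes v: "represents ws (E ! i) v" and v': "represents ws (E ! j) v'"
  shows "computes (frac_code E (length ws) (OAdd i j)) ws (v + v')"
proof -
  define x y z where "x = ws ! fst (E ! i) * den_val ws (snd (E ! j))"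
    and "y = ws ! fst (E ! j) * den_val ws (snd (E ! i))"
    and "z = den_val ws (snd (E ! i)) * den_val ws (snd (E ! j))"
  have z: "eval_op (den_prod_op (snd (E ! i)) (snd (E ! j))) ws = Some z"
    using v v' by (simp add: represents_def eval_den_prod_op z_def)
  have "exec (fst (frac_code E (length ws) (OAdd i j))) ws = Some (ws @ [x, y, x + y, z])"
    using exec_cross_code[OF v v'] eval_op_append[OF z]
    by (simp add: exec_append x_def y_def getv_def nth_append)
  moreover have
    "represents (ws @ [x, y, x + y, z]) (snd (frac_code E (length ws) (OAdd i j))) (v + v')"
    using v v' by (simp add: represents_def den_val_def nth_append x_def y_def z_def field_simps)
  ultimately show ?thesis
    by (metis computes.simps prod.collapse)
qed

lemma computes_frac_code_sub:
  assumes v: "represents ws (E ! i) v" and v': "represents ws (E ! j) v'"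
  shows "computes (frac_code E (length ws) (OSub i j)) ws (v - v')"
proof -
  define x y z where "x = ws ! fst (E ! i) * den_val ws (snd (E ! j))"
    and "y = ws ! fst (E ! j) * den_val ws (snd (E ! i))"
    and "z = den_val ws (snd (E ! i)) * den_val ws (snd (E ! j))"
  have z: "eval_op (den_prod_op (snd (E ! i)) (snd (E ! j))) ws = Some z"
    using v v' by (simp add: represents_def eval_den_prod_op z_def)
  have "exec (fst (frac_code E (length ws) (OSub i j))) ws = Some (ws @ [x, y, x - y, z])"
    using exec_cross_code[OF v v'] eval_op_append[OF z]
    by (simp add: exec_append x_def y_def getv_def nth_append)
  moreover have
    "represents (ws @ [x, y, x - y, z]) (snd (frac_code E (length ws) (OSub i j))) (v - v')"
    using v v' by (simp add: represents_def den_val_def nth_append x_def y_def z_def field_simps)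
  ultimately show ?thesis
    by (metis computes.simps prod.collapse)
qed

lemma computes_frac_code_mul:
  assumes v: "represents ws (E ! i) v" and v': "represents ws (E ! j) v'"
  shows "computes (frac_code E (length ws) (OMul i j)) ws (v * v')"
proof -
  define x z where "x = ws ! fst (E ! i) * ws ! fst (E ! j)"
    and "z = den_val ws (snd (E ! i)) * den_val ws (snd (E ! j))"
  have z: "eval_op (den_prod_op (snd (E ! i)) (snd (E ! j))) ws = Some z"
    using v v' by (simp add: represents_def eval_den_prod_op z_def)
  have "exec (fst (frac_code E (length ws) (OMul i j))) ws = Some (ws @ [x, z])"
    using v v' eval_op_append[OF z] by (simp add: x_def getv_def represents_def)
  moreover have "represents (ws @ [x, z]) (snd (frac_code E (length ws) (OMul i j))) (v * v')"
    using v v' by (simp add: represents_def den_val_def nth_append x_def z_def)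
  ultimately show ?thesis
    by (metis computes.simps prod.collapse)
qed

lemma computes_frac_code_div:
  assumes v: "represents ws (E ! i) v" and v': "represents ws (E ! j) v'" and "v' \<noteq> 0"
  shows "computes (frac_code E (length ws) (ODiv i j)) ws (v / v')"
proof -
  define x y where "x = ws ! fst (E ! i) * den_val ws (snd (E ! j))"
    and "y = ws ! fst (E ! j) * den_val ws (snd (E ! i))"
  have "exec (fst (frac_code E (length ws) (ODiv i j))) ws = Some (ws @ [x, y])"
    using exec_cross_code[OF v v'] by (simp add: x_def y_def)
  moreover have "represents (ws @ [x, y]) (snd (frac_code E (length ws) (ODiv i j))) (v / v')"
    using v v' \<open>v' \<noteq> 0\<close> by (simp add: represents_def den_val_def nth_append x_def y_def)
  ultimately show ?thesis
    by (metis computes.simps prod.collapse)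
qed

lemma computes_frac_code:
  assumes sim: "list_all2 (represents ws) E vs" and u: "eval_op op vs = Some u"
  shows "computes (frac_code E (length ws) op) ws u"
proof -
  have rep: "represents ws (E ! i) (vs ! i)" if "i < length vs" for i
    using sim that by (rule list_all2_nthD2)
  show ?thesis
  proof (cases op)
    case (OConst c)
    then show ?thesis using u by (simp add: represents_def den_val_def)
  next
    case (OScale c i)
    with u have i: "i < length vs" and "u = c * vs ! i"
      by (auto simp: getv_def split: if_splits)
    then show ?thesis
      using computes_frac_code_scale[OF rep[OF i]] by (simp only: OScale)
  next
    case (OAdd i j)
    with u have i: "i < length vs" and j: "j < length vs" and "u = vs ! i + vs ! j"
      by (auto simp: getv_def split: if_splits)
    then show ?thesis
      using computes_frac_code_add[OF rep[OF i] rep[OF j]] by (simp only: OAdd)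
  next
    case (OSub i j)
    with u have i: "i < length vs" and j: "j < length vs" and "u = vs ! i - vs ! j"
      by (auto simp: getv_def split: if_splits)
    then show ?thesis
      using computes_frac_code_sub[OF rep[OF i] rep[OF j]] by (simp only: OSub)
  next
    case (OMul i j)
    with u have i: "i < length vs" and j: "j < length vs" and "u = vs ! i * vs ! j"
      by (auto simp: getv_def split: if_splits)
    then show ?thesis
      using computes_frac_code_mul[OF rep[OF i] rep[OF j]] by (simp only: OMul)
  next
    case (ODiv i j)
    with u have i: "i < length vs" and j: "j < length vs" and "vs ! j \<noteq> 0"
      and "u = vs ! i / vs ! j"
      by (auto simp: getv_def split: if_splits)
    then show ?thesis
      using computes_frac_code_div[OF rep[OF i] rep[OF j] \<open>vs ! j \<noteq> 0\<close>] by (simp only: ODiv)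
  qed
qed

fun poly_tree :: "(nat \<times> nat option) list \<Rightarrow> nat \<Rightarrow> 'f::one ctree \<Rightarrow> 'f ctree" where
  "poly_tree E n (Leaf b) = Leaf b"
| "poly_tree E n (Comp op t) =
     (case frac_code E n op of (code, e) \<Rightarrow> comps code (poly_tree (E @ [e]) (n + length code) t))"
| "poly_tree E n (Dec i j t1 t2) =
     comps (cross_code (E ! i) (E ! j)) (Dec n (Suc n) (poly_tree E (n + 2) t1) (poly_tree E (n + 2) t2))"

lemma length_frac_code: "length (fst (frac_code E n op)) \<le> 4"
  by (cases op) (simp_all add: cross_code_def)

lemma height_poly_tree: "height (poly_tree E n T) \<le> 4 * height T"
proof (induction T arbitrary: E n)
  case (Comp op t)
  obtain code e where ce: "frac_code E n op = (code, e)"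
    by (metis surj_pair)
  have "height (poly_tree (E @ [e]) (n + length code) t) \<le> 4 * height t"
    by (rule Comp.IH)
  then show ?case
    using length_frac_code[of E n op] by (simp add: ce height_comps)
next
  case (Dec i j t1 t2)
  have "height (poly_tree E (n + 2) t1) \<le> 4 * max (height t1) (height t2)"
    and "height (poly_tree E (n + 2) t2) \<le> 4 * max (height t1) (height t2)"
    using Dec.IH[of E "n + 2"] by linarith+
  then show ?case by (simp add: height_comps cross_code_def)
qed simp

lemma not_is_div_mul_den_op: "\<not> is_div (mul_den_op a d)"
  by (cases d) auto

lemma not_is_div_den_prod_op: "\<not> is_div (den_prod_op b d)"
  by (cases b; cases d) (auto simp: not_is_div_mul_den_op)

lemma not_is_div_frac_code: "op' \<in> set (fst (frac_code E n op)) \<Longrightarrow> \<not> is_div op'"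
  by (cases op) (auto simp: cross_code_def not_is_div_mul_den_op not_is_div_den_prod_op)

lemma polynomial_poly_tree: "polynomial (poly_tree E n T)"
proof (induction T arbitrary: E n)
  case (Comp op t)
  then show ?case
    using not_is_div_frac_code[of _ E n op] by (auto intro!: polynomial_comps split: prod.split)
qed (auto intro!: polynomial_comps simp: cross_code_def not_is_div_mul_den_op)

lemma run_poly_tree:
  "run T vs = Some r \<Longrightarrow> list_all2 (represents ws) E vs \<Longrightarrow>
     run (poly_tree E (length ws) T) ws = Some r"
proof (induction T arbitrary: E vs ws)
  case (Leaf b)
  then show ?case by simp
next
  case (Comp op t)
  obtain code e where ce: "frac_code E (length ws) op = (code, e)"
    by (metis surj_pair)
  obtain u where u: "eval_op op vs = Some u" and "run t (vs @ [u]) = Some r"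
    using Comp.prems(1) by (auto split: option.splits)
  obtain ws' where exec: "exec code ws = Some ws'" and "represents ws' e u"
    using computes_frac_code[OF Comp.prems(2) u] ce by auto
  moreover obtain w where "ws' = ws @ w" and "length w = length code"
    using exec_SomeD[OF exec] by blast
  moreover have "list_all2 (represents ws') E vs"
    using Comp.prems(2) by (rule list_all2_mono) (simp add: \<open>ws' = ws @ w\<close> represents_append)
  ultimately have "list_all2 (represents ws') (E @ [e]) (vs @ [u])"
    by (simp add: list_all2_appendI)
  then have "run (poly_tree (E @ [e]) (length ws') t) ws' = Some r"
    using Comp.IH \<open>run t (vs @ [u]) = Some r\<close> by blast
  then show ?case
    using ce run_comps[OF exec] \<open>ws' = ws @ w\<close> \<open>length w = length code\<close> by simp
next
  case (Dec i j t1 t2)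
  obtain b where "test vs i j = Some b" and "run (if b then t1 else t2) vs = Some r"
    using Dec.prems(1) by (auto split: option.splits bool.splits)
  then have ij: "i < length vs" "j < length vs" and "b \<longleftrightarrow> vs ! i = vs ! j"
    by (auto simp: test_def getv_def split: if_splits)
  have rep: "represents ws (E ! i) (vs ! i)" "represents ws (E ! j) (vs ! j)"
    using Dec.prems(2) ij by (auto intro: list_all2_nthD2)
  define ws' where "ws' = ws @ [ws ! fst (E ! i) * den_val ws (snd (E ! j)),
                               ws ! fst (E ! j) * den_val ws (snd (E ! i))]"
  have "test ws' (length ws) (Suc (length ws)) = Some b"
    using represents_eq_iff[OF rep] \<open>b \<longleftrightarrow> _\<close> by (simp add: ws'_def test_def getv_def nth_append)
  moreover have "list_all2 (represents ws') E vs"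
    using Dec.prems(2) unfolding ws'_def by (auto elim: list_all2_mono intro: represents_append)
  ultimately have "run (Dec (length ws) (Suc (length ws)) (poly_tree E (length ws') t1)
      (poly_tree E (length ws') t2)) ws' = Some r"
    using Dec.IH \<open>run (if b then t1 else t2) vs = Some r\<close> by (cases b) simp_all
  moreover have "exec (cross_code (E ! i) (E ! j)) ws = Some ws'"
    using exec_cross_code[OF rep] by (simp add: ws'_def)
  ultimately show ?case
    by (simp add: run_comps ws'_def)
qed

theorem lemma2:
  fixes T :: "'f::{field, finite} ctree" and X :: "'f set"
  assumes "decides T X"
  shows "\<exists>T'. decides T' X \<and> pruned T' \<and> polynomial T' \<and> height T' \<le> 4 * height T"
proof -
  define T' where "T' = prune (poly_tree [(0, None)] 1 T) UNIV (\<lambda>x. [x])"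
  have "run (poly_tree [(0, None)] (length [x]) T) [x] = Some (x \<in> X)" for x :: 'f
    using assms by (intro run_poly_tree) (auto simp: decides_def represents_def den_val_def)
  then have "run T' [x] = Some (x \<in> X)" for x
    using run_prune[of x UNIV _ "\<lambda>x. [x]"] by (simp add: T'_def)
  then have "decides T' X"
    by (simp add: decides_def)
  moreover have "pruned T'"
    by (simp add: pruned_def T'_def pruned_at_prune)
  moreover have "polynomial T'"
    by (simp add: T'_def polynomial_prune polynomial_poly_tree)
  moreover have "height T' \<le> 4 * height T"
    using height_prune height_poly_tree unfolding T'_def by (rule order.trans)
  ultimately show ?thesis by blast
qed

end
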